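(* Every pre-Hilbert $*$-category is quasi-abelian, i.e. it is additive, every morphism has a kernel and a cokernel, normal monomorphisms are stable under pushout along arbitrary morphisms, and normal epimorphisms are stable under pullback along arbitrary morphisms.
   Context: A $*$-category is a category equipped with a choice of morphism $f^*\colon Y\to X$ for each morphism $f\colon X\to Y$ such that $1^*=1$, $(gf)^*=f^*g^*$ and $(f^* )^*=f$. A morphism $f$ is an isometry if $f^*f=1$. A kernel of $f$ is an equaliser of $f$ and the zero morphism; a cokernel is dual; a normal monomorphism (resp. epimorphism) is a morphism that is a kernel (resp. cokernel) of some morphism. An orthonormal biproduct of $X_1,X_2$ is a biproduct $(X,s_1,r_1,s_2,r_2)$ with $r_k=s_k^*$. A pre-Hilbert $*$-category is a $*$-category in which (R1) there is a zero object, (R2) every pair of objects has an orthonormal biproduct, (R3) every morphism has an isometric kernel, and (R4) every diagonal $\Delta\colon X\to X\oplus X$ is a normal monomorphism. A category is additive if it has finite biproducts and the induced enrichment in commutative monoids is an enrichment in abelian groups. *)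

theory Defs
  imports "HOL-Algebra.Group"
begin

text \<open>A (small or large) category whose objects are all elements of type 'o and whose
morphisms are all elements of type 'm.  ccomp C g f is the composite g after f,
meaningful when ccod C f = cdom C g.\<close>

record ('o, 'm) cat =
  cdom :: "'m \<Rightarrow> 'o"
  ccod :: "'m \<Rightarrow> 'o"
  ccomp :: "'m \<Rightarrow> 'm \<Rightarrow> 'm"
  cid :: "'o \<Rightarrow> 'm"

definition hom :: "('o, 'm) cat \<Rightarrow> 'm \<Rightarrow> 'o \<Rightarrow> 'o \<Rightarrow> bool" where
  "hom C f X Y \<longleftrightarrow> cdom C f = X \<and> ccod C f = Y"

definition is_category :: "('o, 'm) cat \<Rightarrow> bool" where
  "is_category C \<longleftrightarrow>
     (\<forall>X. cdom C (cid C X) = X \<and> ccod C (cid C X) = X) \<and>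
     (\<forall>f g. ccod C f = cdom C g \<longrightarrow>
        cdom C (ccomp C g f) = cdom C f \<and> ccod C (ccomp C g f) = ccod C g) \<and>
     (\<forall>f. ccomp C f (cid C (cdom C f)) = f \<and> ccomp C (cid C (ccod C f)) f = f) \<and>
     (\<forall>f g h. ccod C f = cdom C g \<and> ccod C g = cdom C h \<longrightarrow>
        ccomp C h (ccomp C g f) = ccomp C (ccomp C h g) f)"

definition star_category :: "('o, 'm) cat \<Rightarrow> ('m \<Rightarrow> 'm) \<Rightarrow> bool" where
  "star_category C S \<longleftrightarrow> is_category C \<and>
     (\<forall>f. cdom C (S f) = ccod C f \<and> ccod C (S f) = cdom C f) \<and>
     (\<forall>X. S (cid C X) = cid C X) \<and>
     (\<forall>f g. ccod C f = cdom C g \<longrightarrow> S (ccomp C g f) = ccomp C (S f) (S g)) \<and>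
     (\<forall>f. S (S f) = f)"

definition isometry :: "('o, 'm) cat \<Rightarrow> ('m \<Rightarrow> 'm) \<Rightarrow> 'm \<Rightarrow> bool" where
  "isometry C S f \<longleftrightarrow> ccomp C (S f) f = cid C (cdom C f)"

definition zero_object :: "('o, 'm) cat \<Rightarrow> 'o \<Rightarrow> bool" where
  "zero_object C Z \<longleftrightarrow> (\<forall>X. (\<exists>!f. hom C f X Z) \<and> (\<exists>!f. hom C f Z X))"

text \<open>The zero morphism X \<rightarrow> Y: the morphism factoring through a zero object
(unique whenever a zero object exists).\<close>
definition zero_mor :: "('o, 'm) cat \<Rightarrow> 'o \<Rightarrow> 'o \<Rightarrow> 'm" where
  "zero_mor C X Y = (SOME f. hom C f X Y \<and>
     (\<exists>Z g h. zero_object C Z \<and> hom C g X Z \<and> hom C h Z Y \<and> f = ccomp C h g))"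

definition equaliser :: "('o, 'm) cat \<Rightarrow> 'm \<Rightarrow> 'm \<Rightarrow> 'm \<Rightarrow> bool" where
  "equaliser C f g e \<longleftrightarrow> ccod C e = cdom C f \<and>
     ccomp C f e = ccomp C g e \<and>
     (\<forall>x. ccod C x = cdom C f \<and> ccomp C f x = ccomp C g x \<longrightarrow>
        (\<exists>!u. ccod C u = cdom C e \<and> ccomp C e u = x))"

definition coequaliser :: "('o, 'm) cat \<Rightarrow> 'm \<Rightarrow> 'm \<Rightarrow> 'm \<Rightarrow> bool" where
  "coequaliser C f g c \<longleftrightarrow> cdom C c = ccod C f \<and>
     ccomp C c f = ccomp C c g \<and>
     (\<forall>x. cdom C x = ccod C f \<and> ccomp C x f = ccomp C x g \<longrightarrow>
        (\<exists>!u. cdom C u = ccod C c \<and> ccomp C u c = x))"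

definition kernel :: "('o, 'm) cat \<Rightarrow> 'm \<Rightarrow> 'm \<Rightarrow> bool" where
  "kernel C f k \<longleftrightarrow> equaliser C f (zero_mor C (cdom C f) (ccod C f)) k"

definition cokernel :: "('o, 'm) cat \<Rightarrow> 'm \<Rightarrow> 'm \<Rightarrow> bool" where
  "cokernel C f c \<longleftrightarrow> coequaliser C f (zero_mor C (cdom C f) (ccod C f)) c"

definition normal_mono :: "('o, 'm) cat \<Rightarrow> 'm \<Rightarrow> bool" where
  "normal_mono C m \<longleftrightarrow> (\<exists>f. kernel C f m)"

definition normal_epi :: "('o, 'm) cat \<Rightarrow> 'm \<Rightarrow> bool" where
  "normal_epi C e \<longleftrightarrow> (\<exists>f. cokernel C f e)"

definition product :: "('o, 'm) cat \<Rightarrow> 'o \<Rightarrow> 'o \<Rightarrow> 'o \<Rightarrow> 'm \<Rightarrow> 'm \<Rightarrow> bool" where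
  "product C X1 X2 P p1 p2 \<longleftrightarrow> hom C p1 P X1 \<and> hom C p2 P X2 \<and>
     (\<forall>Y f1 f2. hom C f1 Y X1 \<and> hom C f2 Y X2 \<longrightarrow>
        (\<exists>!u. hom C u Y P \<and> ccomp C p1 u = f1 \<and> ccomp C p2 u = f2))"

definition coproduct :: "('o, 'm) cat \<Rightarrow> 'o \<Rightarrow> 'o \<Rightarrow> 'o \<Rightarrow> 'm \<Rightarrow> 'm \<Rightarrow> bool" where
  "coproduct C X1 X2 P i1 i2 \<longleftrightarrow> hom C i1 X1 P \<and> hom C i2 X2 P \<and>
     (\<forall>Y f1 f2. hom C f1 X1 Y \<and> hom C f2 X2 Y \<longrightarrow>
        (\<exists>!u. hom C u P Y \<and> ccomp C u i1 = f1 \<and> ccomp C u i2 = f2))"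

definition biproduct :: "('o, 'm) cat \<Rightarrow> 'o \<Rightarrow> 'o \<Rightarrow> 'o \<Rightarrow> 'm \<Rightarrow> 'm \<Rightarrow> 'm \<Rightarrow> 'm \<Rightarrow> bool" where
  "biproduct C X1 X2 X s1 r1 s2 r2 \<longleftrightarrow>
     product C X1 X2 X r1 r2 \<and> coproduct C X1 X2 X s1 s2 \<and>
     ccomp C r1 s1 = cid C X1 \<and> ccomp C r2 s2 = cid C X2 \<and>
     ccomp C r1 s2 = zero_mor C X2 X1 \<and> ccomp C r2 s1 = zero_mor C X1 X2"

definition orthonormal_biproduct ::
  "('o, 'm) cat \<Rightarrow> ('m \<Rightarrow> 'm) \<Rightarrow> 'o \<Rightarrow> 'o \<Rightarrow> 'o \<Rightarrow> 'm \<Rightarrow> 'm \<Rightarrow> 'm \<Rightarrow> 'm \<Rightarrow> bool" where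
  "orthonormal_biproduct C S X1 X2 X s1 r1 s2 r2 \<longleftrightarrow>
     biproduct C X1 X2 X s1 r1 s2 r2 \<and> r1 = S s1 \<and> r2 = S s2"

definition pre_hilbert :: "('o, 'm) cat \<Rightarrow> ('m \<Rightarrow> 'm) \<Rightarrow> bool" where
  "pre_hilbert C S \<longleftrightarrow> star_category C S \<and>
     (\<exists>Z. zero_object C Z) \<and>
     (\<forall>X1 X2. \<exists>X s1 r1 s2 r2. orthonormal_biproduct C S X1 X2 X s1 r1 s2 r2) \<and>
     (\<forall>f. \<exists>k. kernel C f k \<and> isometry C S k) \<and>
     (\<forall>X B s1 r1 s2 r2 d. orthonormal_biproduct C S X X B s1 r1 s2 r2 \<and>
        hom C d X B \<and> ccomp C r1 d = cid C X \<and> ccomp C r2 d = cid C X \<longrightarrow>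
        normal_mono C d)"

definition madd :: "('o, 'm) cat \<Rightarrow> 'm \<Rightarrow> 'm \<Rightarrow> 'm" where
  "madd C f g = (SOME h. \<exists>B s1 r1 s2 r2 p d.
     biproduct C (ccod C f) (ccod C f) B s1 r1 s2 r2 \<and>
     hom C p (cdom C f) B \<and> ccomp C r1 p = f \<and> ccomp C r2 p = g \<and>
     hom C d B (ccod C f) \<and> ccomp C d s1 = cid C (ccod C f) \<and> ccomp C d s2 = cid C (ccod C f) \<and>
     h = ccomp C d p)"

definition hom_group :: "('o, 'm) cat \<Rightarrow> 'o \<Rightarrow> 'o \<Rightarrow> 'm monoid" where
  "hom_group C X Y = \<lparr>carrier = {f. hom C f X Y}, mult = madd C, one = zero_mor C X Y\<rparr>"

definition additive :: "('o, 'm) cat \<Rightarrow> bool" where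
  "additive C \<longleftrightarrow> is_category C \<and>
     (\<exists>Z. zero_object C Z) \<and>
     (\<forall>X1 X2. \<exists>X s1 r1 s2 r2. biproduct C X1 X2 X s1 r1 s2 r2) \<and>
     (\<forall>X Y. comm_group (hom_group C X Y)) \<and>
     (\<forall>f g h. cdom C f = cdom C g \<and> ccod C f = ccod C g \<and> ccod C f = cdom C h \<longrightarrow>
        ccomp C h (madd C f g) = madd C (ccomp C h f) (ccomp C h g)) \<and>
     (\<forall>f g k. cdom C f = cdom C g \<and> ccod C f = ccod C g \<and> ccod C k = cdom C f \<longrightarrow>
        ccomp C (madd C f g) k = madd C (ccomp C f k) (ccomp C g k))"

definition pushout :: "('o, 'm) cat \<Rightarrow> 'm \<Rightarrow> 'm \<Rightarrow> 'm \<Rightarrow> 'm \<Rightarrow> bool" where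
  "pushout C f g q1 q2 \<longleftrightarrow> cdom C f = cdom C g \<and>
     cdom C q1 = ccod C f \<and> cdom C q2 = ccod C g \<and> ccod C q1 = ccod C q2 \<and>
     ccomp C q1 f = ccomp C q2 g \<and>
     (\<forall>x1 x2. cdom C x1 = ccod C f \<and> cdom C x2 = ccod C g \<and> ccod C x1 = ccod C x2 \<and>
        ccomp C x1 f = ccomp C x2 g \<longrightarrow>
        (\<exists>!u. cdom C u = ccod C q1 \<and> ccomp C u q1 = x1 \<and> ccomp C u q2 = x2))"

definition pullback :: "('o, 'm) cat \<Rightarrow> 'm \<Rightarrow> 'm \<Rightarrow> 'm \<Rightarrow> 'm \<Rightarrow> bool" where
  "pullback C f g p1 p2 \<longleftrightarrow> ccod C f = ccod C g \<and>
     ccod C p1 = cdom C f \<and> ccod C p2 = cdom C g \<and> cdom C p1 = cdom C p2 \<and>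
     ccomp C f p1 = ccomp C g p2 \<and>
     (\<forall>x1 x2. ccod C x1 = cdom C f \<and> ccod C x2 = cdom C g \<and> cdom C x1 = cdom C x2 \<and>
        ccomp C f x1 = ccomp C g x2 \<longrightarrow>
        (\<exists>!u. ccod C u = cdom C p1 \<and> ccomp C p1 u = x1 \<and> ccomp C p2 u = x2))"

definition quasi_abelian :: "('o, 'm) cat \<Rightarrow> bool" where
  "quasi_abelian C \<longleftrightarrow> additive C \<and>
     (\<forall>f. \<exists>k. kernel C f k) \<and>
     (\<forall>f. \<exists>c. cokernel C f c) \<and>
     (\<forall>m f q1 q2. normal_mono C m \<and> pushout C m f q1 q2 \<longrightarrow> normal_mono C q2) \<and>
     (\<forall>e f p1 p2. normal_epi C e \<and> pullback C e f p1 p2 \<longrightarrow> normal_epi C p2)"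

end

theory Submission
  imports Defs
begin

(* Biproducts make every hom-set a commutative monoid: the sum formed with the codiagonal and the
   one formed with the diagonal satisfy an interchange law, so they agree and commute
   (Eckmann-Hilton).  The substance is the existence of negatives.  Let k : K -> X + X be an
   isometric kernel of the codiagonal.  The swap of X + X restricts along k to tau = k* swap k
   with 1 + tau = 0 (for Hilbert spaces K is the antidiagonal and tau = -1).  With p = pi1 k one
   computes p* (p + p) = 1, and p* is monic because the diagonal is a kernel; so X is a retract
   of K and (p + p) tau p* is a negative of the identity of X.
   In the resulting additive category split monomorphisms are kernels, normal monomorphisms split
   because kernels may be taken isometric, and a pushout of a split monomorphism splits.  The
   involution * exchanges kernels with cokernels and pullbacks with pushouts, which gives the
   remaining conditions. *)

section \<open>Categories, products and kernels\<close>

locale category =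
  fixes C :: "('o, 'm) cat"
  assumes is_category: "is_category C"
begin

abbreviation dm where "dm \<equiv> cdom C"
abbreviation cd where "cd \<equiv> ccod C"
abbreviation cmp (infixr "\<cdot>" 70) where "g \<cdot> f \<equiv> ccomp C g f"
abbreviation idm where "idm \<equiv> cid C"

lemma dom_id [simp]: "dm (idm X) = X" and cod_id [simp]: "cd (idm X) = X"
  using is_category by (simp_all add: is_category_def)

lemma dom_comp [simp]: "cd f = dm g \<Longrightarrow> dm (g \<cdot> f) = dm f"
  and cod_comp [simp]: "cd f = dm g \<Longrightarrow> cd (g \<cdot> f) = cd g"
  using is_category by (simp_all add: is_category_def)

lemma comp_id_right [simp]: "dm f = X \<Longrightarrow> f \<cdot> idm X = f"
  and comp_id_left [simp]: "cd f = Y \<Longrightarrow> idm Y \<cdot> f = f"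
  using is_category by (auto simp add: is_category_def)

lemma comp_assoc [simp]: "cd f = dm g \<Longrightarrow> cd g = dm h \<Longrightarrow> (h \<cdot> g) \<cdot> f = h \<cdot> (g \<cdot> f)"
  using is_category unfolding is_category_def by metis

lemma productD:
  assumes "product C X1 X2 P q1 q2"
  shows "dm q1 = P" "cd q1 = X1" "dm q2 = P" "cd q2 = X2"
  using assms unfolding product_def hom_def by simp_all

lemma coproductD:
  assumes "coproduct C X1 X2 P j1 j2"
  shows "dm j1 = X1" "cd j1 = P" "dm j2 = X2" "cd j2 = P"
  using assms unfolding coproduct_def hom_def by simp_all

lemma product_pairing:
  assumes "product C X1 X2 P q1 q2" "cd f1 = X1" "cd f2 = X2" "dm f1 = dm f2"
  obtains u where "dm u = dm f1" "cd u = P" "q1 \<cdot> u = f1" "q2 \<cdot> u = f2"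
  using assms unfolding product_def hom_def by metis

lemma product_ext:
  assumes P: "product C X1 X2 P q1 q2" and "cd u = P" "cd v = P" "dm v = dm u"
    and "q1 \<cdot> u = q1 \<cdot> v" "q2 \<cdot> u = q2 \<cdot> v"
  shows "u = v"
proof -
  have "\<exists>!w. hom C w (dm u) P \<and> q1 \<cdot> w = q1 \<cdot> u \<and> q2 \<cdot> w = q2 \<cdot> u"
    using P productD[OF P] \<open>cd u = P\<close> unfolding product_def
    by (elim conjE allE[of _ "dm u"] allE[of _ "q1 \<cdot> u"] allE[of _ "q2 \<cdot> u"]) (simp add: hom_def)
  then show ?thesis using assms unfolding hom_def by metis
qed

lemma coproduct_copairing:
  assumes "coproduct C X1 X2 P j1 j2" "dm f1 = X1" "dm f2 = X2" "cd f1 = cd f2"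
  obtains u where "dm u = P" "cd u = cd f1" "u \<cdot> j1 = f1" "u \<cdot> j2 = f2"
  using assms unfolding coproduct_def hom_def by metis

lemma coproduct_ext:
  assumes Q: "coproduct C X1 X2 P j1 j2" and "dm u = P" "dm v = P" "cd v = cd u"
    and "u \<cdot> j1 = v \<cdot> j1" "u \<cdot> j2 = v \<cdot> j2"
  shows "u = v"
proof -
  have "\<exists>!w. hom C w P (cd u) \<and> w \<cdot> j1 = u \<cdot> j1 \<and> w \<cdot> j2 = u \<cdot> j2"
    using Q coproductD[OF Q] \<open>dm u = P\<close> unfolding coproduct_def
    by (elim conjE allE[of _ "cd u"] allE[of _ "u \<cdot> j1"] allE[of _ "u \<cdot> j2"]) (simp add: hom_def)
  then show ?thesis using assms unfolding hom_def by metis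
qed

lemma biproduct_comp_independent:
  assumes B: "biproduct C Y1 Y2 B s1 r1 s2 r2" and B': "biproduct C Y1 Y2 B' s1' r1' s2' r2'"
    and p: "dm p = T" "cd p = B" and p': "dm p' = T" "cd p' = B'"
    and rp: "r1 \<cdot> p = r1' \<cdot> p'" "r2 \<cdot> p = r2' \<cdot> p'"
    and d: "dm d = B" "cd d = W" and d': "dm d' = B'" "cd d' = W"
    and ds: "d \<cdot> s1 = d' \<cdot> s1'" "d \<cdot> s2 = d' \<cdot> s2'"
  shows "d \<cdot> p = d' \<cdot> p'"
proof -
  have P: "product C Y1 Y2 B r1 r2" and P': "product C Y1 Y2 B' r1' r2'"
    and Q: "coproduct C Y1 Y2 B s1 s2" and Q': "coproduct C Y1 Y2 B' s1' s2'"
    using B B' unfolding biproduct_def by auto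
  note h = productD[OF P] productD[OF P'] coproductD[OF Q] coproductD[OF Q']
  note E = B[unfolded biproduct_def] B'[unfolded biproduct_def]
  obtain \<phi> where \<phi>: "dm \<phi> = B" "cd \<phi> = B'" "r1' \<cdot> \<phi> = r1" "r2' \<cdot> \<phi> = r2"
    using product_pairing[OF P', of r1 r2] h E by auto
  have "\<phi> \<cdot> s1 = s1'" "\<phi> \<cdot> s2 = s2'" "\<phi> \<cdot> p = p'"
    by (rule product_ext[OF P']; use h \<phi> E p p' rp in \<open>simp_all flip: comp_assoc\<close>)+
  moreover have "d' \<cdot> \<phi> = d"
    by (rule coproduct_ext[OF Q]) (use h \<phi> E d d' ds \<open>\<phi> \<cdot> s1 = s1'\<close> \<open>\<phi> \<cdot> s2 = s2'\<close> in simp_all)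
  ultimately show ?thesis using h \<phi> p d d' E by (metis comp_assoc)
qed

lemma pushout_split_mono:
  assumes po: "pushout C m f q1 q2" and r: "dm r = cd m" "r \<cdot> m = idm (dm m)"
  obtains u where "dm u = cd q2" "u \<cdot> q2 = idm (dm q2)"
proof -
  have q: "dm m = dm f" "dm q1 = cd m" "dm q2 = cd f" "cd q1 = cd q2"
    using po unfolding pushout_def by simp_all
  have universal: "\<forall>x1 x2. dm x1 = cd m \<and> dm x2 = cd f \<and> cd x1 = cd x2 \<and> x1 \<cdot> m = x2 \<cdot> f \<longrightarrow>
      (\<exists>!u. dm u = cd q1 \<and> u \<cdot> q1 = x1 \<and> u \<cdot> q2 = x2)"
    using po unfolding pushout_def by (elim conjE)
  have "cd r = dm f" using r q by (metis cod_comp cod_id)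
  then have "\<exists>!u. dm u = cd q1 \<and> u \<cdot> q1 = f \<cdot> r \<and> u \<cdot> q2 = idm (cd f)"
    using universal r q by simp
  then have "\<exists>u. dm u = cd q1 \<and> u \<cdot> q1 = f \<cdot> r \<and> u \<cdot> q2 = idm (cd f)" by (rule ex1_implies_ex)
  then obtain u where "dm u = cd q1" "u \<cdot> q2 = idm (cd f)" by blast
  then show ?thesis using q by (intro that[of u]) simp_all
qed

end

locale zero_category = category +
  assumes zero_object_exists: "\<exists>Z. zero_object C Z"
begin

abbreviation zm where "zm \<equiv> zero_mor C"

lemma zero_object_arrows_unique:
  assumes "zero_object C Z"
  shows "hom C f X Z \<Longrightarrow> hom C g X Z \<Longrightarrow> f = g" and "hom C f Z X \<Longrightarrow> hom C g Z X \<Longrightarrow> f = g"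
  using assms unfolding zero_object_def by blast+

lemma factorisations_through_zero_objects_agree:
  assumes Z: "zero_object C Z" "hom C g X Z" "hom C h Z Y"
    and Z': "zero_object C Z'" "hom C g' X Z'" "hom C h' Z' Y"
  shows "h \<cdot> g = h' \<cdot> g'"
proof -
  obtain a b where a: "hom C a Z Z'" and b: "hom C b Z' Z"
    using Z(1) Z'(1) unfolding zero_object_def by metis
  have ba: "b \<cdot> a = idm Z"
    using zero_object_arrows_unique(1)[OF Z(1), of "b \<cdot> a" Z "idm Z"] a b by (simp add: hom_def)
  have hb: "h \<cdot> b = h'"
    using zero_object_arrows_unique(2)[OF Z'(1), of "h \<cdot> b" Y h'] b Z Z' by (simp add: hom_def)
  have ag: "a \<cdot> g = g'"
    using zero_object_arrows_unique(1)[OF Z'(1), of "a \<cdot> g" X g'] a Z Z' by (simp add: hom_def)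
  have "h \<cdot> g = h \<cdot> ((b \<cdot> a) \<cdot> g)" using ba Z by (simp add: hom_def)
  also have "\<dots> = (h \<cdot> b) \<cdot> (a \<cdot> g)" using a b Z by (simp add: hom_def)
  finally show ?thesis using hb ag by simp
qed

lemma zero_mor_factorisation:
  assumes "zero_object C Z" "hom C g X Z" "hom C h Z Y"
  shows "zm X Y = h \<cdot> g"
proof -
  have "\<exists>f. hom C f X Y \<and> (\<exists>Z g h. zero_object C Z \<and> hom C g X Z \<and> hom C h Z Y \<and> f = h \<cdot> g)"
    using assms unfolding hom_def
    by (intro exI[of _ "h \<cdot> g"] conjI exI[of _ Z] exI[of _ g] exI[of _ h]) auto
  from someI_ex[OF this] obtain Z' g' h' where
    "zero_object C Z'" "hom C g' X Z'" "hom C h' Z' Y" "zm X Y = h' \<cdot> g'"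
    unfolding zero_mor_def by blast
  then show ?thesis using factorisations_through_zero_objects_agree[OF assms] by metis
qed

lemma obtain_zero_factorisation:
  obtains Z g h where "zero_object C Z" "hom C g X Z" "hom C h Z Y" "zm X Y = h \<cdot> g"
proof -
  obtain Z where Z: "zero_object C Z" using zero_object_exists ..
  moreover obtain g h where "hom C g X Z" "hom C h Z Y" using Z unfolding zero_object_def by metis
  ultimately show ?thesis using that zero_mor_factorisation by blast
qed

lemma dom_zero [simp]: "dm (zm X Y) = X" and cod_zero [simp]: "cd (zm X Y) = Y"
proof -
  obtain Z g h where "hom C g X Z" "hom C h Z Y" "zm X Y = h \<cdot> g"
    by (rule obtain_zero_factorisation)
  then show "dm (zm X Y) = X" "cd (zm X Y) = Y" by (simp_all add: hom_def)
qed

lemma zero_comp [simp]: "cd f = X \<Longrightarrow> zm X Y \<cdot> f = zm (dm f) Y"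
proof -
  assume f: "cd f = X"
  obtain Z g h where Z: "zero_object C Z" "hom C g X Z" "hom C h Z Y" "zm X Y = h \<cdot> g"
    by (rule obtain_zero_factorisation)
  then have "zm X Y \<cdot> f = h \<cdot> (g \<cdot> f)" using f by (simp add: hom_def)
  also have "\<dots> = zm (dm f) Y" using Z f by (intro zero_mor_factorisation[symmetric]) (auto simp: hom_def)
  finally show ?thesis .
qed

lemma comp_zero [simp]: "dm f = Y \<Longrightarrow> f \<cdot> zm X Y = zm X (cd f)"
proof -
  assume f: "dm f = Y"
  obtain Z g h where Z: "zero_object C Z" "hom C g X Z" "hom C h Z Y" "zm X Y = h \<cdot> g"
    by (rule obtain_zero_factorisation)
  then have "f \<cdot> zm X Y = (f \<cdot> h) \<cdot> g" using f by (simp add: hom_def)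
  also have "\<dots> = zm X (cd f)" using Z f by (intro zero_mor_factorisation[symmetric]) (auto simp: hom_def)
  finally show ?thesis .
qed

lemma kernelD:
  assumes "kernel C f k"
  shows "cd k = dm f" "f \<cdot> k = zm (dm k) (cd f)"
proof -
  from assms have "cd k = dm f" "f \<cdot> k = zm (dm f) (cd f) \<cdot> k"
    unfolding kernel_def equaliser_def by blast+
  then show "cd k = dm f" "f \<cdot> k = zm (dm k) (cd f)" by simp_all
qed

lemma kernel_universal:
  assumes "kernel C f k" "cd x = dm f" "f \<cdot> x = zm (dm x) (cd f)"
  shows "\<exists>!u. cd u = dm k \<and> k \<cdot> u = x"
proof -
  have "cd x = dm f \<and> f \<cdot> x = zm (dm f) (cd f) \<cdot> x" using assms(2,3) by simp
  moreover have "cd x = dm f \<and> f \<cdot> x = zm (dm f) (cd f) \<cdot> x \<longrightarrow> (\<exists>!u. cd u = dm k \<and> k \<cdot> u = x)"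
    using assms(1) unfolding kernel_def equaliser_def by (elim conjE allE[of _ x])
  ultimately show ?thesis by (rule rev_mp)
qed

lemma kernel_lift:
  assumes "kernel C f k" "cd x = dm f" "f \<cdot> x = zm (dm x) (cd f)"
  obtains u where "cd u = dm k" "k \<cdot> u = x"
  using kernel_universal[OF assms] by blast

lemma kernel_mono:
  assumes k: "kernel C f k" and "cd a = dm k" "cd b = dm k" "k \<cdot> a = k \<cdot> b"
  shows "a = b"
proof -
  have "\<exists>!u. cd u = dm k \<and> k \<cdot> u = k \<cdot> a"
    using kernelD[OF k] assms by (intro kernel_universal[OF k]) (simp_all flip: comp_assoc)
  then show ?thesis using assms(2-4) by (elim ex1E) metis
qed

end

section \<open>Addition of morphisms through biproducts\<close>

locale square_biproduct_category = zero_category +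
  fixes B in1 pr1 in2 pr2
  assumes biproduct_square: "biproduct C X X (B X) (in1 X) (pr1 X) (in2 X) (pr2 X)"
begin

abbreviation madd_infix (infixl "\<oplus>" 65) where "f \<oplus> g \<equiv> madd C f g"

lemma product_square: "product C X X (B X) (pr1 X) (pr2 X)"
  and coproduct_square: "coproduct C X X (B X) (in1 X) (in2 X)"
  using biproduct_square unfolding biproduct_def by auto

lemma biproduct_square_homs [simp]:
  "dm (in1 X) = X" "cd (in1 X) = B X" "dm (in2 X) = X" "cd (in2 X) = B X"
  "dm (pr1 X) = B X" "cd (pr1 X) = X" "dm (pr2 X) = B X" "cd (pr2 X) = X"
  using productD[OF product_square] coproductD[OF coproduct_square] by auto

lemma pr_in [simp]:
  "pr1 X \<cdot> in1 X = idm X" "pr2 X \<cdot> in2 X = idm X" "pr1 X \<cdot> in2 X = zm X X" "pr2 X \<cdot> in1 X = zm X X"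
  using biproduct_square unfolding biproduct_def by auto

lemma pr_in_comp [simp]:
  "cd f = X \<Longrightarrow> pr1 X \<cdot> (in1 X \<cdot> f) = f" "cd f = X \<Longrightarrow> pr2 X \<cdot> (in2 X \<cdot> f) = f"
  "cd f = X \<Longrightarrow> pr1 X \<cdot> (in2 X \<cdot> f) = zm (dm f) X" "cd f = X \<Longrightarrow> pr2 X \<cdot> (in1 X \<cdot> f) = zm (dm f) X"
  by (simp_all flip: comp_assoc)

lemma pr_ext:
  "cd u = B X \<Longrightarrow> cd v = B X \<Longrightarrow> dm v = dm u \<Longrightarrow> pr1 X \<cdot> u = pr1 X \<cdot> v \<Longrightarrow> pr2 X \<cdot> u = pr2 X \<cdot> v
    \<Longrightarrow> u = v"
  using product_ext[OF product_square] by blast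

lemma in_ext:
  "dm u = B X \<Longrightarrow> dm v = B X \<Longrightarrow> cd v = cd u \<Longrightarrow> u \<cdot> in1 X = v \<cdot> in1 X \<Longrightarrow> u \<cdot> in2 X = v \<cdot> in2 X
    \<Longrightarrow> u = v"
  using coproduct_ext[OF coproduct_square] by blast

definition pair where
  "pair X f g = (THE u. dm u = dm f \<and> cd u = B X \<and> pr1 X \<cdot> u = f \<and> pr2 X \<cdot> u = g)"

definition copair where
  "copair X f g = (THE u. dm u = B X \<and> cd u = cd f \<and> u \<cdot> in1 X = f \<and> u \<cdot> in2 X = g)"

lemma pair_simps [simp]:
  assumes "cd f = X" "cd g = X" "dm f = dm g"
  shows "dm (pair X f g) = dm f" "cd (pair X f g) = B X" "pr1 X \<cdot> pair X f g = f" "pr2 X \<cdot> pair X f g = g"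
proof -
  obtain u where u: "dm u = dm f" "cd u = B X" "pr1 X \<cdot> u = f" "pr2 X \<cdot> u = g"
    using product_pairing[OF product_square assms] by metis
  have "pair X f g = u"
    unfolding pair_def
  proof (rule the_equality)
    show "\<And>v. dm v = dm f \<and> cd v = B X \<and> pr1 X \<cdot> v = f \<and> pr2 X \<cdot> v = g \<Longrightarrow> v = u"
      by (rule pr_ext[of _ X]) (use u in simp_all)
  qed (use u in simp)
  then show "dm (pair X f g) = dm f" "cd (pair X f g) = B X" "pr1 X \<cdot> pair X f g = f" "pr2 X \<cdot> pair X f g = g"
    using u by simp_all
qed

lemma copair_simps [simp]:
  assumes "dm f = X" "dm g = X" "cd f = cd g"
  shows "dm (copair X f g) = B X" "cd (copair X f g) = cd f"
    "copair X f g \<cdot> in1 X = f" "copair X f g \<cdot> in2 X = g"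
proof -
  obtain u where u: "dm u = B X" "cd u = cd f" "u \<cdot> in1 X = f" "u \<cdot> in2 X = g"
    using coproduct_copairing[OF coproduct_square assms] by metis
  have "copair X f g = u"
    unfolding copair_def
  proof (rule the_equality)
    show "\<And>v. dm v = B X \<and> cd v = cd f \<and> v \<cdot> in1 X = f \<and> v \<cdot> in2 X = g \<Longrightarrow> v = u"
      by (rule in_ext[of _ X]) (use u in simp_all)
  qed (use u in simp)
  then show "dm (copair X f g) = B X" "cd (copair X f g) = cd f"
    "copair X f g \<cdot> in1 X = f" "copair X f g \<cdot> in2 X = g"
    using u by simp_all
qed

lemma pair_comp:
  "cd f = X \<Longrightarrow> cd g = X \<Longrightarrow> dm f = dm g \<Longrightarrow> cd h = dm f \<Longrightarrow> pair X f g \<cdot> h = pair X (f \<cdot> h) (g \<cdot> h)"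
  by (rule pr_ext[of _ X]) (simp_all flip: comp_assoc)

lemma comp_copair:
  "dm f = X \<Longrightarrow> dm g = X \<Longrightarrow> cd f = cd g \<Longrightarrow> dm h = cd f \<Longrightarrow> h \<cdot> copair X f g = copair X (h \<cdot> f) (h \<cdot> g)"
  by (rule in_ext[of _ X]) simp_all

definition diag where "diag X = pair X (idm X) (idm X)"
definition codiag where "codiag X = copair X (idm X) (idm X)"

lemma diag_simps [simp]:
  "dm (diag X) = X" "cd (diag X) = B X" "pr1 X \<cdot> diag X = idm X" "pr2 X \<cdot> diag X = idm X"
  unfolding diag_def by simp_all

lemma codiag_simps [simp]:
  "dm (codiag X) = B X" "cd (codiag X) = X" "codiag X \<cdot> in1 X = idm X" "codiag X \<cdot> in2 X = idm X"
  unfolding codiag_def by simp_all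

lemma madd_eq_codiag_pair:
  assumes "cd f = Y" "cd g = Y" "dm f = dm g"
  shows "f \<oplus> g = codiag Y \<cdot> pair Y f g"
proof -
  let ?P = "\<lambda>h. \<exists>B s1 r1 s2 r2 p d.
     biproduct C (cd f) (cd f) B s1 r1 s2 r2 \<and>
     hom C p (dm f) B \<and> r1 \<cdot> p = f \<and> r2 \<cdot> p = g \<and>
     hom C d B (cd f) \<and> d \<cdot> s1 = idm (cd f) \<and> d \<cdot> s2 = idm (cd f) \<and> h = d \<cdot> p"
  have ex: "?P (codiag Y \<cdot> pair Y f g)"
    unfolding hom_def
    by (rule exI[of _ "B Y"], rule exI[of _ "in1 Y"], rule exI[of _ "pr1 Y"], rule exI[of _ "in2 Y"],
        rule exI[of _ "pr2 Y"], rule exI[of _ "pair Y f g"], rule exI[of _ "codiag Y"])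
      (use biproduct_square[of Y] assms in simp)
  have unique: "h = codiag Y \<cdot> pair Y f g" if "?P h" for h
  proof -
    from that obtain B' s1 r1 s2 r2 p d where
      bp: "biproduct C (cd f) (cd f) B' s1 r1 s2 r2" and "hom C p (dm f) B'" "r1 \<cdot> p = f" "r2 \<cdot> p = g"
      "hom C d B' (cd f)" "d \<cdot> s1 = idm (cd f)" "d \<cdot> s2 = idm (cd f)" "h = d \<cdot> p"
      by (elim exE conjE) (rule that, assumption+)
    then show ?thesis
      using biproduct_comp_independent[OF bp[unfolded assms(1)] biproduct_square,
          where p' = "pair Y f g" and d' = "codiag Y"] assms
      by (simp add: hom_def)
  qed
  have "?P (SOME h. ?P h)" by (rule someI[of ?P, OF ex])
  then show ?thesis unfolding madd_def by (rule unique)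
qed

lemma madd_homs [simp]:
  "dm f = X \<Longrightarrow> cd f = Y \<Longrightarrow> dm g = X \<Longrightarrow> cd g = Y \<Longrightarrow> dm (f \<oplus> g) = X"
  "dm f = X \<Longrightarrow> cd f = Y \<Longrightarrow> dm g = X \<Longrightarrow> cd g = Y \<Longrightarrow> cd (f \<oplus> g) = Y"
  by (simp_all add: madd_eq_codiag_pair)

definition diag_sum where "diag_sum X f g = copair X f g \<cdot> diag X"

lemma pair_zero_right: "dm f = X \<Longrightarrow> cd f = Y \<Longrightarrow> pair Y f (zm X Y) = in1 Y \<cdot> f"
  and pair_zero_left: "dm f = X \<Longrightarrow> cd f = Y \<Longrightarrow> pair Y (zm X Y) f = in2 Y \<cdot> f"
  by (rule pr_ext[of _ Y]; simp)+

lemma copair_zero_right: "dm f = X \<Longrightarrow> cd f = Y \<Longrightarrow> copair X f (zm X Y) = f \<cdot> pr1 X"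
  and copair_zero_left: "dm f = X \<Longrightarrow> cd f = Y \<Longrightarrow> copair X (zm X Y) f = f \<cdot> pr2 X"
  by (rule in_ext[of _ X]; simp)+

lemma madd_zero_right [simp]: "dm f = X \<Longrightarrow> cd f = Y \<Longrightarrow> f \<oplus> zm X Y = f"
  and madd_zero_left [simp]: "dm f = X \<Longrightarrow> cd f = Y \<Longrightarrow> zm X Y \<oplus> f = f"
  by (simp_all add: madd_eq_codiag_pair pair_zero_right pair_zero_left flip: comp_assoc)

lemma diag_sum_zero_right: "dm f = X \<Longrightarrow> cd f = Y \<Longrightarrow> diag_sum X f (zm X Y) = f"
  and diag_sum_zero_left: "dm f = X \<Longrightarrow> cd f = Y \<Longrightarrow> diag_sum X (zm X Y) f = f"
  by (simp_all add: diag_sum_def copair_zero_right copair_zero_left)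

lemma interchange:
  assumes "dm a = X" "cd a = Y" "dm b = X" "cd b = Y" "dm c = X" "cd c = Y" "dm d = X" "cd d = Y"
  shows "diag_sum X a b \<oplus> diag_sum X c d = diag_sum X (a \<oplus> c) (b \<oplus> d)"
proof -
  define M where "M = pair Y (copair X a b) (copair X c d)"
  have M: "dm M = B X" "cd M = B Y" using assms by (simp_all add: M_def)
  have "diag_sum X a b \<oplus> diag_sum X c d = codiag Y \<cdot> (M \<cdot> diag X)"
    using assms by (simp add: madd_eq_codiag_pair diag_sum_def M_def pair_comp)
  also have "codiag Y \<cdot> M = copair X (codiag Y \<cdot> pair Y a c) (codiag Y \<cdot> pair Y b d)"
    by (rule in_ext[of _ X]) (use assms M in \<open>simp_all add: M_def pair_comp\<close>)
  then have "codiag Y \<cdot> (M \<cdot> diag X) = copair X (codiag Y \<cdot> pair Y a c) (codiag Y \<cdot> pair Y b d) \<cdot> diag X"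
    using M by (simp flip: comp_assoc)
  finally show ?thesis using assms by (simp add: madd_eq_codiag_pair diag_sum_def)
qed

lemma madd_eq_diag_sum:
  assumes "dm a = X" "cd a = Y" "dm b = X" "cd b = Y"
  shows "a \<oplus> b = diag_sum X a b"
proof -
  have "a \<oplus> b = diag_sum X a (zm X Y) \<oplus> diag_sum X (zm X Y) b"
    using assms by (simp add: diag_sum_zero_right diag_sum_zero_left)
  also have "\<dots> = diag_sum X a b" using assms by (simp add: interchange)
  finally show ?thesis .
qed

lemma madd_comm:
  assumes "dm a = X" "cd a = Y" "dm b = X" "cd b = Y"
  shows "a \<oplus> b = b \<oplus> a"
proof -
  have "a \<oplus> b = diag_sum X (zm X Y) a \<oplus> diag_sum X b (zm X Y)"
    using assms by (simp add: diag_sum_zero_right diag_sum_zero_left)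
  also have "\<dots> = diag_sum X b a" using assms by (simp add: interchange)
  finally show ?thesis using assms madd_eq_diag_sum by simp
qed

lemma madd_assoc:
  assumes "dm a = X" "cd a = Y" "dm b = X" "cd b = Y" "dm c = X" "cd c = Y"
  shows "a \<oplus> b \<oplus> c = a \<oplus> (b \<oplus> c)"
proof -
  have "a \<oplus> b \<oplus> c = diag_sum X a b \<oplus> diag_sum X (zm X Y) c"
    using assms by (simp add: diag_sum_zero_left madd_eq_diag_sum)
  also have "\<dots> = diag_sum X a (b \<oplus> c)" using assms by (simp add: interchange)
  also have "\<dots> = a \<oplus> (b \<oplus> c)" using assms by (simp add: madd_eq_diag_sum[of a X Y "b \<oplus> c"])
  finally show ?thesis .
qed

lemma madd_comp:
  assumes "dm f = X" "cd f = Y" "dm g = X" "cd g = Y" "cd k = X"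
  shows "(f \<oplus> g) \<cdot> k = f \<cdot> k \<oplus> g \<cdot> k"
  using assms by (simp add: madd_eq_codiag_pair pair_comp)

lemma comp_madd:
  assumes "dm f = X" "cd f = Y" "dm g = X" "cd g = Y" "dm h = Y"
  shows "h \<cdot> (f \<oplus> g) = h \<cdot> f \<oplus> h \<cdot> g"
  using assms by (simp add: madd_eq_diag_sum[of _ X] diag_sum_def comp_copair flip: comp_assoc)

lemma madd_eq_zero_cancel:
  assumes "dm a = X" "cd a = Y" "dm b = X" "cd b = Y" "dm c = X" "cd c = Y"
    and "a \<oplus> c = zm X Y" "b \<oplus> c = zm X Y"
  shows "a = b"
proof -
  have "a = a \<oplus> (c \<oplus> b)" using assms by (simp add: madd_comm[of c X Y b])
  also have "\<dots> = (a \<oplus> c) \<oplus> b" using assms(1-6) by (simp add: madd_assoc)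
  also have "\<dots> = b" using assms by simp
  finally show ?thesis .
qed

lemma in1_madd_in2: "in1 X \<oplus> in2 X = diag X"
  by (rule pr_ext[of _ X]) (simp_all add: comp_madd)

lemma biproduct_identity: "in1 X \<cdot> pr1 X \<oplus> in2 X \<cdot> pr2 X = idm (B X)"
  by (rule in_ext[of _ X]) (simp_all add: madd_comp)

definition swap where "swap X = copair X (in2 X) (in1 X)"

lemma swap_simps [simp]:
  "dm (swap X) = B X" "cd (swap X) = B X" "swap X \<cdot> in1 X = in2 X" "swap X \<cdot> in2 X = in1 X"
  by (simp_all add: swap_def)

lemma pr_swap: "pr1 X \<cdot> swap X = pr2 X" "pr2 X \<cdot> swap X = pr1 X"
  by (rule in_ext[of _ X]; simp)+

lemma codiag_swap: "codiag X \<cdot> swap X = codiag X"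
  by (rule in_ext[of _ X]) simp_all

lemma identity_madd_swap: "idm (B X) \<oplus> swap X = diag X \<cdot> codiag X"
proof (rule in_ext[of _ X])
  show "(idm (B X) \<oplus> swap X) \<cdot> in1 X = (diag X \<cdot> codiag X) \<cdot> in1 X"
    by (simp add: madd_comp in1_madd_in2)
  show "(idm (B X) \<oplus> swap X) \<cdot> in2 X = (diag X \<cdot> codiag X) \<cdot> in2 X"
    using madd_comm[of "in1 X" X "B X" "in2 X"] by (simp add: madd_comp in1_madd_in2)
qed simp_all

lemma negation_from_retract:
  assumes "dm a = X" "cd a = K" "dm b = K" "cd b = X" "b \<cdot> a = idm X"
    and "dm \<tau> = K" "cd \<tau> = K" "idm K \<oplus> \<tau> = zm K K"
  shows "idm X \<oplus> b \<cdot> \<tau> \<cdot> a = zm X X"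
proof -
  have "idm X \<oplus> b \<cdot> \<tau> \<cdot> a = b \<cdot> ((idm K \<oplus> \<tau>) \<cdot> a)"
    using assms(1-7) by (simp add: madd_comp comp_madd)
  then show ?thesis using assms by simp
qed

end

locale ab_category = square_biproduct_category +
  assumes negation_exists: "\<exists>n. dm n = X \<and> cd n = X \<and> idm X \<oplus> n = zm X X"
begin

lemma comm_group_hom_group: "comm_group (hom_group C X Y)"
proof (rule comm_groupI)
  fix x y w
  assume "x \<in> carrier (hom_group C X Y)" "y \<in> carrier (hom_group C X Y)" "w \<in> carrier (hom_group C X Y)"
  then have x: "dm x = X" "cd x = Y" and y: "dm y = X" "cd y = Y" and w: "dm w = X" "cd w = Y"
    by (simp_all add: hom_group_def hom_def)
  show "x \<otimes>\<^bsub>hom_group C X Y\<^esub> y \<in> carrier (hom_group C X Y)"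
    using x y by (simp add: hom_group_def hom_def)
  show "x \<otimes>\<^bsub>hom_group C X Y\<^esub> y \<otimes>\<^bsub>hom_group C X Y\<^esub> w =
        x \<otimes>\<^bsub>hom_group C X Y\<^esub> (y \<otimes>\<^bsub>hom_group C X Y\<^esub> w)"
    using x y w by (simp add: hom_group_def madd_assoc)
  show "x \<otimes>\<^bsub>hom_group C X Y\<^esub> y = y \<otimes>\<^bsub>hom_group C X Y\<^esub> x"
    using x y by (simp add: hom_group_def madd_comm[of x X Y y])
next
  show "\<one>\<^bsub>hom_group C X Y\<^esub> \<in> carrier (hom_group C X Y)"
    by (simp add: hom_group_def hom_def)
next
  fix x
  assume "x \<in> carrier (hom_group C X Y)"
  then have x: "dm x = X" "cd x = Y" by (simp_all add: hom_group_def hom_def)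
  show "\<one>\<^bsub>hom_group C X Y\<^esub> \<otimes>\<^bsub>hom_group C X Y\<^esub> x = x"
    using x by (simp add: hom_group_def)
  obtain n where n: "dm n = X" "cd n = X" "idm X \<oplus> n = zm X X"
    using negation_exists by blast
  have "x \<cdot> n \<oplus> x = x \<cdot> (idm X \<oplus> n)"
    using x n(1,2) by (simp add: comp_madd madd_comm[of "x \<cdot> n" X Y x])
  then have "x \<cdot> n \<oplus> x = zm X Y" using x n by simp
  then show "\<exists>y\<in>carrier (hom_group C X Y). y \<otimes>\<^bsub>hom_group C X Y\<^esub> x = \<one>\<^bsub>hom_group C X Y\<^esub>"
    using x n by (intro bexI[of _ "x \<cdot> n"]) (simp_all add: hom_group_def hom_def)
qed

text \<open>A split monomorphism \<open>m\<close> with retraction \<open>r\<close> is a kernel of \<open>1 - m r\<close>.\<close>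

lemma split_mono_is_normal:
  assumes r: "dm r = cd m" "r \<cdot> m = idm (dm m)"
  shows "normal_mono C m"
proof -
  define P where "P = cd m"
  have cr: "cd r = dm m" using r by (metis cod_comp cod_id)
  obtain n where n: "dm n = P" "cd n = P" "idm P \<oplus> n = zm P P"
    using negation_exists by blast
  define h where "h = idm P \<oplus> n \<cdot> m \<cdot> r"
  have h: "dm h = P" "cd h = P" using n r cr by (simp_all add: h_def P_def)
  have h_comp: "h \<cdot> x = x \<oplus> n \<cdot> m \<cdot> r \<cdot> x" if "cd x = P" for x
    using that n r cr by (simp add: h_def madd_comp P_def)
  have "kernel C h m" unfolding kernel_def equaliser_def
  proof (intro conjI allI impI)
    show "cd m = dm h" using h by (simp add: P_def)
    have "h \<cdot> m = (idm P \<oplus> n) \<cdot> m"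
      using h_comp[of m] r cr n(1,2) by (simp add: madd_comp P_def)
    then show "h \<cdot> m = zm (dm h) (cd h) \<cdot> m" using n h by (simp add: P_def)
  next
    fix x
    assume "cd x = dm h \<and> h \<cdot> x = zm (dm h) (cd h) \<cdot> x"
    then have x: "cd x = P" "x \<oplus> n \<cdot> m \<cdot> r \<cdot> x = zm (dm x) P"
      using h h_comp by auto
    have "m \<cdot> r \<cdot> x \<oplus> n \<cdot> m \<cdot> r \<cdot> x = (idm P \<oplus> n) \<cdot> m \<cdot> r \<cdot> x"
      using x(1) n(1,2) r cr by (simp add: madd_comp P_def)
    then have "m \<cdot> r \<cdot> x \<oplus> n \<cdot> m \<cdot> r \<cdot> x = zm (dm x) P"
      using x n r cr by (simp add: P_def)
    then have "x = m \<cdot> r \<cdot> x"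
      using madd_eq_zero_cancel[of x "dm x" P "m \<cdot> r \<cdot> x" "n \<cdot> m \<cdot> r \<cdot> x"] x n r cr
      by (simp add: P_def)
    moreover have "v = r \<cdot> x" if "cd v = dm m" "m \<cdot> v = x" for v
    proof -
      have "r \<cdot> (m \<cdot> v) = v" using that(1) r by (simp flip: comp_assoc)
      then show ?thesis using that(2) by simp
    qed
    ultimately show "\<exists>!v. cd v = dm m \<and> m \<cdot> v = x"
      using x r cr by (intro ex1I[of _ "r \<cdot> x"]) (simp_all add: P_def)
  qed
  then show ?thesis unfolding normal_mono_def by blast
qed

end

section \<open>Duality in *-categories\<close>

locale star_cat = category +
  fixes S
  assumes star_category: "star_category C S"
begin

lemma dom_star [simp]: "dm (S f) = cd f" and cod_star [simp]: "cd (S f) = dm f"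
  and star_id [simp]: "S (idm X) = idm X" and star_star [simp]: "S (S f) = f"
  using star_category by (simp_all add: star_category_def)

lemma star_comp [simp]: "cd f = dm g \<Longrightarrow> S (g \<cdot> f) = S f \<cdot> S g"
  using star_category by (simp add: star_category_def)

lemma star_inj: "S f = S g \<Longrightarrow> f = g"
  by (metis star_star)

lemma all_star: "(\<forall>x. P x) \<longleftrightarrow> (\<forall>x. P (S x))"
  by (metis star_star)

lemma ex1_star: "(\<exists>!x. P x) \<longleftrightarrow> (\<exists>!x. P (S x))"
  by (metis star_star)

lemma coequaliser_star_iff_equaliser:
  assumes "dm f = dm g"
  shows "coequaliser C (S f) (S g) (S e) \<longleftrightarrow> equaliser C f g e"
proof -
  have comp: "cd x = dm f \<and> S x \<cdot> S f = S x \<cdot> S g \<longleftrightarrow> cd x = dm f \<and> f \<cdot> x = g \<cdot> x" for x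
    using assms by (metis star_comp star_inj)
  have lift: "(\<exists>!u. dm u = dm e \<and> u \<cdot> S e = S x) \<longleftrightarrow> (\<exists>!v. cd v = dm e \<and> e \<cdot> v = x)" for x
  proof -
    have eq: "dm (S v) = dm e \<and> S v \<cdot> S e = S x \<longleftrightarrow> cd v = dm e \<and> e \<cdot> v = x" for v
      by (metis cod_star dom_star star_comp star_inj)
    have "(\<exists>!u. dm u = dm e \<and> u \<cdot> S e = S x) \<longleftrightarrow> (\<exists>!v. dm (S v) = dm e \<and> S v \<cdot> S e = S x)"
      by (rule ex1_star)
    also have "\<dots> \<longleftrightarrow> (\<exists>!v. cd v = dm e \<and> e \<cdot> v = x)" by (simp only: eq)
    finally show ?thesis .
  qed
  have "(\<forall>x. dm x = cd (S f) \<and> x \<cdot> S f = x \<cdot> S g \<longrightarrow> (\<exists>!u. dm u = cd (S e) \<and> u \<cdot> S e = x))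
    \<longleftrightarrow> (\<forall>x. dm (S x) = cd (S f) \<and> S x \<cdot> S f = S x \<cdot> S g \<longrightarrow> (\<exists>!u. dm u = cd (S e) \<and> u \<cdot> S e = S x))"
    by (rule all_star)
  also have "\<dots> \<longleftrightarrow> (\<forall>x. cd x = dm f \<and> f \<cdot> x = g \<cdot> x \<longrightarrow> (\<exists>!v. cd v = dm e \<and> e \<cdot> v = x))"
    by (simp only: dom_star cod_star comp lift)
  finally have universal: "(\<forall>x. dm x = cd (S f) \<and> x \<cdot> S f = x \<cdot> S g \<longrightarrow> (\<exists>!u. dm u = cd (S e) \<and> u \<cdot> S e = x))
    \<longleftrightarrow> (\<forall>x. cd x = dm f \<and> f \<cdot> x = g \<cdot> x \<longrightarrow> (\<exists>!v. cd v = dm e \<and> e \<cdot> v = x))" .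
  have "dm (S e) = cd (S f) \<and> S e \<cdot> S f = S e \<cdot> S g \<longleftrightarrow> cd e = dm f \<and> f \<cdot> e = g \<cdot> e"
    by (simp only: dom_star cod_star comp)
  then show ?thesis
    unfolding equaliser_def coequaliser_def by (simp only: conj_assoc[symmetric] universal)
qed

lemma pushout_star_of_pullback:
  assumes "pullback C f g p1 p2"
  shows "pushout C (S f) (S g) (S p1) (S p2)"
proof -
  have p: "cd f = cd g" "cd p1 = dm f" "cd p2 = dm g" "dm p1 = dm p2" "f \<cdot> p1 = g \<cdot> p2"
    using assms unfolding pullback_def by simp_all
  have universal: "\<forall>y1 y2. cd y1 = dm f \<and> cd y2 = dm g \<and> dm y1 = dm y2 \<and> f \<cdot> y1 = g \<cdot> y2 \<longrightarrow>
      (\<exists>!v. cd v = dm p1 \<and> p1 \<cdot> v = y1 \<and> p2 \<cdot> v = y2)"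
    using assms unfolding pullback_def by (elim conjE)
  show ?thesis unfolding pushout_def
  proof (intro conjI allI impI)
    show "S p1 \<cdot> S f = S p2 \<cdot> S g"
      by (simp only: star_comp[OF p(2), symmetric] star_comp[OF p(3), symmetric] p(5))
    fix x1 x2
    assume x: "dm x1 = cd (S f) \<and> dm x2 = cd (S g) \<and> cd x1 = cd x2 \<and> x1 \<cdot> S f = x2 \<cdot> S g"
    then have "f \<cdot> S x1 = g \<cdot> S x2" by (metis cod_star star_comp star_star)
    then have "\<exists>!v. cd v = dm p1 \<and> p1 \<cdot> v = S x1 \<and> p2 \<cdot> v = S x2"
      using universal x by simp
    then obtain v where v: "cd v = dm p1 \<and> p1 \<cdot> v = S x1 \<and> p2 \<cdot> v = S x2"
      and v_unique: "\<forall>w. cd w = dm p1 \<and> p1 \<cdot> w = S x1 \<and> p2 \<cdot> w = S x2 \<longrightarrow> w = v"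
      by (rule ex1E)
    show "\<exists>!u. dm u = cd (S p1) \<and> u \<cdot> S p1 = x1 \<and> u \<cdot> S p2 = x2"
    proof (rule ex1I[of _ "S v"])
      show "dm (S v) = cd (S p1) \<and> S v \<cdot> S p1 = x1 \<and> S v \<cdot> S p2 = x2"
        using v p by (metis cod_star dom_star star_comp star_star)
      show "u = S v" if "dm u = cd (S p1) \<and> u \<cdot> S p1 = x1 \<and> u \<cdot> S p2 = x2" for u
        using v_unique that p by (metis cod_star star_comp star_star)
    qed
  qed (use p in simp_all)
qed

end

locale zero_star_cat = zero_category + star_cat
begin

lemma star_zero [simp]: "S (zm X Y) = zm Y X"
proof -
  obtain Z g h where "zero_object C Z" "hom C g X Z" "hom C h Z Y" "zm X Y = h \<cdot> g"
    by (rule obtain_zero_factorisation)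
  then show ?thesis using zero_mor_factorisation[of Z "S h" Y "S g" X] by (simp add: hom_def)
qed

lemma cokernel_star_iff_kernel: "cokernel C (S f) (S k) \<longleftrightarrow> kernel C f k"
  unfolding kernel_def cokernel_def
  using coequaliser_star_iff_equaliser[of f "zm (dm f) (cd f)" k] by simp

lemma normal_epi_star_iff_normal_mono: "normal_epi C (S m) \<longleftrightarrow> normal_mono C m"
  unfolding normal_epi_def normal_mono_def by (metis cokernel_star_iff_kernel star_star)

end

section \<open>Pre-Hilbert categories\<close>

locale pre_hilbert_category =
  fixes C :: "('o, 'm) cat" and S :: "'m \<Rightarrow> 'm"
  assumes pre_hilbert: "pre_hilbert C S"

sublocale pre_hilbert_category \<subseteq> zero_star_cat
  using pre_hilbert unfolding pre_hilbert_def
  by unfold_locales (simp_all add: star_category_def)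

context pre_hilbert_category
begin

definition ortho_square where
  "ortho_square X = (SOME (B, s1, s2). orthonormal_biproduct C S X X B s1 (S s1) s2 (S s2))"

definition dsum where "dsum X = fst (ortho_square X)"
definition inj1 where "inj1 X = fst (snd (ortho_square X))"
definition inj2 where "inj2 X = snd (snd (ortho_square X))"

lemma orthonormal_square:
  "orthonormal_biproduct C S X X (dsum X) (inj1 X) (S (inj1 X)) (inj2 X) (S (inj2 X))"
proof -
  obtain B s1 r1 s2 r2 where "orthonormal_biproduct C S X X B s1 r1 s2 r2"
    using pre_hilbert unfolding pre_hilbert_def by blast
  then have "\<exists>t. (\<lambda>(B, s1, s2). orthonormal_biproduct C S X X B s1 (S s1) s2 (S s2)) t"
    by (intro exI[of _ "(B, s1, s2)"]) (auto simp: orthonormal_biproduct_def)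
  then have "(\<lambda>(B, s1, s2). orthonormal_biproduct C S X X B s1 (S s1) s2 (S s2)) (ortho_square X)"
    unfolding ortho_square_def by (rule someI_ex)
  then show ?thesis by (simp add: dsum_def inj1_def inj2_def split_beta)
qed

sublocale square_biproduct_category C dsum inj1 "\<lambda>X. S (inj1 X)" inj2 "\<lambda>X. S (inj2 X)"
  using orthonormal_square by unfold_locales (simp add: orthonormal_biproduct_def)

lemma star_diag: "S (diag X) = codiag X"
proof (rule in_ext[of _ X])
  show "S (diag X) \<cdot> inj1 X = codiag X \<cdot> inj1 X" using star_comp[of "diag X" "S (inj1 X)"] by simp
  show "S (diag X) \<cdot> inj2 X = codiag X \<cdot> inj2 X" using star_comp[of "diag X" "S (inj2 X)"] by simp
qed simp_all

lemma star_swap: "S (swap X) = swap X"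
proof (rule in_ext[of _ X])
  show "S (swap X) \<cdot> inj1 X = swap X \<cdot> inj1 X"
    using star_comp[of "swap X" "S (inj1 X)"] by (simp add: pr_swap)
  show "S (swap X) \<cdot> inj2 X = swap X \<cdot> inj2 X"
    using star_comp[of "swap X" "S (inj2 X)"] by (simp add: pr_swap)
qed simp_all

lemma diag_normal_mono: "normal_mono C (diag X)"
proof -
  have "\<forall>X B s1 r1 s2 r2 d. orthonormal_biproduct C S X X B s1 r1 s2 r2 \<and>
      hom C d X B \<and> r1 \<cdot> d = idm X \<and> r2 \<cdot> d = idm X \<longrightarrow> normal_mono C d"
    using pre_hilbert unfolding pre_hilbert_def by (elim conjE)
  then show ?thesis using orthonormal_square[of X]
    by (elim allE[of _ X] allE[of _ "dsum X"] allE[of _ "inj1 X"] allE[of _ "S (inj1 X)"]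
        allE[of _ "inj2 X"] allE[of _ "S (inj2 X)"] allE[of _ "diag X"]) (simp add: hom_def)
qed

end

locale isometric_codiagonal_kernel = pre_hilbert_category +
  fixes X k
  assumes kernel_codiag: "kernel C (codiag X) k" and isometric: "S k \<cdot> k = idm (dm k)"
begin

abbreviation K where "K \<equiv> dm k"

lemma k_simps [simp]: "cd k = dsum X" "codiag X \<cdot> k = zm K X"
  using kernelD[OF kernel_codiag] by simp_all

lemma k_mono: "cd a = K \<Longrightarrow> cd b = K \<Longrightarrow> k \<cdot> a = k \<cdot> b \<Longrightarrow> a = b"
  using kernel_mono[OF kernel_codiag] by blast

definition \<tau> where "\<tau> = S k \<cdot> swap X \<cdot> k"

lemma \<tau>_simps [simp]: "dm \<tau> = K" "cd \<tau> = K"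
  by (simp_all add: \<tau>_def)

lemma swap_k: "swap X \<cdot> k = k \<cdot> \<tau>"
proof -
  obtain u where u: "cd u = K" "k \<cdot> u = swap X \<cdot> k"
    by (rule kernel_lift[OF kernel_codiag, of "swap X \<cdot> k"]) (simp_all add: codiag_swap flip: comp_assoc)
  then have "\<tau> = u" unfolding \<tau>_def using isometric by (simp flip: u(2) comp_assoc)
  then show ?thesis using u by simp
qed

lemma star_\<tau>: "S \<tau> = \<tau>"
  by (simp add: \<tau>_def star_swap)

lemma id_madd_\<tau>: "idm K \<oplus> \<tau> = zm K K"
proof (rule k_mono)
  have "k \<cdot> (idm K \<oplus> \<tau>) = (idm (dsum X) \<oplus> swap X) \<cdot> k"
    by (simp add: comp_madd madd_comp swap_k)
  also have "\<dots> = k \<cdot> zm K K" by (simp add: identity_madd_swap)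
  finally show "k \<cdot> (idm K \<oplus> \<tau>) = k \<cdot> zm K K" .
qed simp_all

definition p where "p = S (inj1 X) \<cdot> k"

lemma p_simps [simp]: "dm p = K" "cd p = X"
  by (simp_all add: p_def)

lemma pr2_k: "S (inj2 X) \<cdot> k = p \<cdot> \<tau>"
proof -
  have "S (inj2 X) \<cdot> k = S (inj1 X) \<cdot> (swap X \<cdot> k)" by (simp add: pr_swap flip: comp_assoc)
  then show ?thesis by (simp add: swap_k p_def)
qed

lemma star_p_left_inverse: "S p \<cdot> (p \<oplus> p) = idm K"
proof -
  define v where "v = S p \<cdot> p"
  have v: "dm v = K" "cd v = K" by (simp_all add: v_def)
  have "v \<oplus> v \<cdot> \<tau> = v \<cdot> (idm K \<oplus> \<tau>)" using v by (simp add: comp_madd)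
  then have 1: "v \<oplus> v \<cdot> \<tau> = zm K K" using v by (simp add: id_madd_\<tau>)
  have "\<tau> \<cdot> v \<cdot> \<tau> \<oplus> v \<cdot> \<tau> = (idm K \<oplus> \<tau>) \<cdot> v \<cdot> \<tau>"
    using v by (simp add: madd_comp madd_comm[of "v \<cdot> \<tau>" K K])
  then have 2: "\<tau> \<cdot> v \<cdot> \<tau> \<oplus> v \<cdot> \<tau> = zm K K" using v by (simp add: id_madd_\<tau>)
  have "\<tau> \<cdot> v \<cdot> \<tau> = v" using madd_eq_zero_cancel[OF _ _ _ _ _ _ 2 1] v by simp
  then have q: "S (S (inj2 X) \<cdot> k) \<cdot> (S (inj2 X) \<cdot> k) = v"
    unfolding pr2_k by (simp add: star_\<tau> v_def)
  have "idm K = S k \<cdot> ((inj1 X \<cdot> S (inj1 X) \<oplus> inj2 X \<cdot> S (inj2 X)) \<cdot> k)"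
    using isometric by (simp add: biproduct_identity)
  also have "\<dots> = v \<oplus> S (S (inj2 X) \<cdot> k) \<cdot> (S (inj2 X) \<cdot> k)"
    by (simp add: madd_comp comp_madd v_def p_def)
  also have "\<dots> = S p \<cdot> (p \<oplus> p)" by (simp only: q) (simp add: v_def comp_madd)
  finally show ?thesis by simp
qed

lemma star_p_cancel:
  assumes g: "cd g = X" "cd h = X" "dm g = dm h" and eq: "S p \<cdot> g = S p \<cdot> h"
  shows "g = h"
proof -
  obtain f where f: "kernel C f (diag X)" using diag_normal_mono unfolding normal_mono_def by blast
  have f_simps: "dm f = dsum X" "f \<cdot> diag X = zm X (cd f)" using kernelD[OF f] by simp_all
  have codiag_Sf: "codiag X \<cdot> S f = S (f \<cdot> diag X)" using f_simps(1) by (simp add: star_diag)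
  obtain w where w: "cd w = K" "k \<cdot> w = S f"
    by (rule kernel_lift[OF kernel_codiag, of "S f"]) (simp_all add: codiag_Sf f_simps)
  have f_w: "S w \<cdot> S k = f" using w star_comp[of w k] by simp
  (* Since f factors through k*, it kills every x with k* x = 0; for x = <g, h> this holds
     because k* x = (1 + tau) p* g. *)
  define x where "x = pair X g h"
  have x: "dm x = dm g" "cd x = dsum X" using g by (simp_all add: x_def)
  have "S k \<cdot> x = S k \<cdot> ((inj1 X \<cdot> S (inj1 X) \<oplus> inj2 X \<cdot> S (inj2 X)) \<cdot> x)"
    using x by (simp add: biproduct_identity)
  also have "\<dots> = S p \<cdot> g \<oplus> S (S (inj2 X) \<cdot> k) \<cdot> h"
    using g by (simp add: madd_comp comp_madd x_def p_def)
  also have "\<dots> = (idm K \<oplus> \<tau>) \<cdot> (S p \<cdot> g)"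
    unfolding pr2_k using g by (simp add: madd_comp star_\<tau> flip: eq)
  finally have "S k \<cdot> x = zm (dm g) K" using g by (simp add: id_madd_\<tau>)
  then have fx: "f \<cdot> x = zm (dm x) (cd f)" using w x by (simp flip: f_w)
  obtain u where u: "cd u = X" "diag X \<cdot> u = x"
    by (rule kernel_lift[OF f, of x]) (simp_all add: fx x f_simps)
  have "g = S (inj1 X) \<cdot> x" "h = S (inj2 X) \<cdot> x" using g by (simp_all add: x_def)
  then show ?thesis using u(1) by (simp flip: u(2) comp_assoc)
qed

lemma negation: "\<exists>n. dm n = X \<and> cd n = X \<and> idm X \<oplus> n = zm X X"
proof -
  have "(p \<oplus> p) \<cdot> S p = idm X"
  proof (rule star_p_cancel)
    show "S p \<cdot> ((p \<oplus> p) \<cdot> S p) = S p \<cdot> idm X"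
      using star_p_left_inverse by (simp flip: comp_assoc)
  qed simp_all
  then have "idm X \<oplus> (p \<oplus> p) \<cdot> \<tau> \<cdot> S p = zm X X"
    by (intro negation_from_retract[of _ _ K]) (simp_all add: id_madd_\<tau>)
  then show ?thesis by (intro exI[of _ "(p \<oplus> p) \<cdot> \<tau> \<cdot> S p"]) simp
qed

end

context pre_hilbert_category
begin

lemma isometric_kernel_exists: "\<exists>k. kernel C f k \<and> S k \<cdot> k = idm (dm k)"
  using pre_hilbert unfolding pre_hilbert_def isometry_def by blast

lemma negation_of_identity: "\<exists>n. dm n = X \<and> cd n = X \<and> idm X \<oplus> n = zm X X"
proof -
  obtain k where "kernel C (codiag X) k" "S k \<cdot> k = idm (dm k)"
    using isometric_kernel_exists by blast
  then interpret isometric_codiagonal_kernel C S X k by unfold_locales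
  show ?thesis by (rule negation)
qed

sublocale ab_category C dsum inj1 "\<lambda>X. S (inj1 X)" inj2 "\<lambda>X. S (inj2 X)"
  by unfold_locales (rule negation_of_identity)

lemma additive: "additive C"
  unfolding additive_def
proof (intro conjI allI impI)
  show "is_category C" by (rule is_category)
  show "\<exists>Z. zero_object C Z" by (rule zero_object_exists)
  show "\<exists>B s1 r1 s2 r2. biproduct C X1 X2 B s1 r1 s2 r2" for X1 X2
  proof -
    have "\<forall>X1 X2. \<exists>B s1 r1 s2 r2. orthonormal_biproduct C S X1 X2 B s1 r1 s2 r2"
      using pre_hilbert unfolding pre_hilbert_def by (elim conjE)
    then show ?thesis unfolding orthonormal_biproduct_def by blast
  qed
  show "comm_group (hom_group C X Y)" for X Y by (rule comm_group_hom_group)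
  show "h \<cdot> (f \<oplus> g) = h \<cdot> f \<oplus> h \<cdot> g" if "dm f = dm g \<and> cd f = cd g \<and> cd f = dm h" for f g h
    using that by (intro comp_madd[of f "dm f" "cd f" g h]) auto
  show "(f \<oplus> g) \<cdot> k = f \<cdot> k \<oplus> g \<cdot> k" if "dm f = dm g \<and> cd f = cd g \<and> cd k = dm f" for f g k
    using that by (intro madd_comp[of f "dm f" "cd f" g k]) auto
qed

lemma cokernel_exists: "\<exists>c. cokernel C f c"
proof -
  obtain k where "kernel C (S f) k" using isometric_kernel_exists by blast
  then have "cokernel C f (S k)" using cokernel_star_iff_kernel[of "S f" k] by simp
  then show ?thesis ..
qed

lemma normal_mono_split:
  assumes "normal_mono C m"
  obtains r where "dm r = cd m" "r \<cdot> m = idm (dm m)"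
proof -
  obtain g where m: "kernel C g m" using assms unfolding normal_mono_def by blast
  obtain k where k: "kernel C g k" and isometric: "S k \<cdot> k = idm (dm k)"
    using isometric_kernel_exists by blast
  note m_simps = kernelD[OF m] and k_simps = kernelD[OF k]
  obtain \<phi> where \<phi>: "cd \<phi> = dm k" "k \<cdot> \<phi> = m"
    by (rule kernel_lift[OF k, of m]) (simp_all add: m_simps)
  obtain \<psi> where \<psi>: "cd \<psi> = dm m" "m \<cdot> \<psi> = k"
    by (rule kernel_lift[OF m, of k]) (simp_all add: k_simps)
  have dom_\<psi>: "dm \<psi> = dm k" using dom_comp[of \<psi> m] \<psi> by simp
  have \<psi>\<phi>: "\<psi> \<cdot> \<phi> = idm (dm m)"
  proof (rule kernel_mono[OF m])
    have "m \<cdot> (\<psi> \<cdot> \<phi>) = (m \<cdot> \<psi>) \<cdot> \<phi>" using \<phi>(1) \<psi>(1) dom_\<psi> by simp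
    then show "m \<cdot> (\<psi> \<cdot> \<phi>) = m \<cdot> idm (dm m)" using \<phi> \<psi> by simp
  qed (use \<phi>(1) \<psi>(1) dom_\<psi> in simp_all)
  show ?thesis
  proof (rule that[of "\<psi> \<cdot> S k"])
    show "dm (\<psi> \<cdot> S k) = cd m" using dom_\<psi> k_simps m_simps by simp
    have "(\<psi> \<cdot> S k) \<cdot> m = \<psi> \<cdot> (S k \<cdot> (k \<cdot> \<phi>))"
      using dom_\<psi> k_simps m_simps by (simp add: \<phi>(2))
    also have "\<dots> = \<psi> \<cdot> \<phi>" using isometric \<phi>(1) by (simp flip: comp_assoc)
    finally show "(\<psi> \<cdot> S k) \<cdot> m = idm (dm m)" using \<psi>\<phi> by simp
  qed
qed

lemma normal_mono_pushout:
  assumes "normal_mono C m" "pushout C m f q1 q2"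
  shows "normal_mono C q2"
proof -
  obtain r where "dm r = cd m" "r \<cdot> m = idm (dm m)" using normal_mono_split[OF assms(1)] .
  then obtain u where "dm u = cd q2" "u \<cdot> q2 = idm (dm q2)" by (rule pushout_split_mono[OF assms(2)])
  then show ?thesis by (rule split_mono_is_normal)
qed

lemma normal_epi_pullback:
  assumes "normal_epi C e" "pullback C e f p1 p2"
  shows "normal_epi C p2"
proof -
  have "normal_mono C (S e)" using assms(1) normal_epi_star_iff_normal_mono[of "S e"] by simp
  then have "normal_mono C (S p2)"
    by (rule normal_mono_pushout[OF _ pushout_star_of_pullback[OF assms(2)]])
  then show ?thesis using normal_epi_star_iff_normal_mono[of "S p2"] by simp
qed

lemma quasi_abelian: "quasi_abelian C"
  unfolding quasi_abelian_def
proof (intro conjI allI impI)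
  show "\<exists>k. kernel C f k" for f using isometric_kernel_exists by blast
qed (use additive cokernel_exists normal_mono_pushout normal_epi_pullback in auto)

end

theorem proposition3p6:
  fixes C :: "('o, 'm) cat" and S :: "'m \<Rightarrow> 'm"
  assumes "pre_hilbert C S"
  shows "quasi_abelian C"
proof -
  interpret pre_hilbert_category C S using assms by unfold_locales
  show ?thesis by (rule quasi_abelian)
qed

end
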